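(* Let $A$ be a finite alphabet. If $d: A^n \to A$ is a weakly progressive block map, then the induced sliding block code $\tau_d: A^{\mathbb{N}} \to A^{\mathbb{N}}$ is a local homeomorphism.
   Context: $A$ is a finite set with the discrete topology; $\mathbb{N}=\{1,2,3,\dots\}$; $A^{\mathbb{N}}$ is the space of one-sided infinite sequences over $A$ with the product topology; $A^k$ is the set of words of length $k$. A block map is a function $d: A^n \to A$, and the induced sliding block code $\tau_d: A^{\mathbb{N}}\to A^{\mathbb{N}}$ is defined by $\tau_d(x)_i = d(x_i \cdots x_{i+n-1})$. For $w=w_1\cdots w_{n-1}\in A^{n-1}$ and $m\in\mathbb{N}$, define $p_{d,m}^{w}: A^m\to A^m$ by letting, for $\beta\in A^m$, the $j$-th letter ($1\le j\le m$) of $p_{d,m}^{w}(\beta)$ be $d$ applied to the subword of length $n$ starting at position $j$ of the concatenated word $w\beta$ (so $p_{d,m}^{w}(a\alpha)=d(w_1\cdots w_{n-1}a)\,d(w_2\cdots w_{n-1}a\alpha_1)\cdots$). The block map $d$ is weakly progressive of order $m$ if for every $\mu \in A^n$ and every $\nu \in A^m$ with $d(\mu)= \nu_1$ there exists a unique $a \in A$ such that the equation $p_{d,m}^{\mu_1 \cdots \mu_{n-1}}(a \alpha)=\nu$ has a solution $\alpha \in A^{m-1}$; $d$ is weakly progressive if it is weakly progressive of order $m$ for some $m$. A continuous map $f:X\to Y$ is a local homeomorphism if every $x\in X$ has an open neighborhood $U$ such that $f(U)$ is open in $Y$ and $f:U\to f(U)$ is a homeomorphism. *)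

theory Defs
  imports "HOL-Analysis.Analysis"
begin

definition words :: "'a set \<Rightarrow> nat \<Rightarrow> 'a list set" where
  "words A k = {w. length w = k \<and> set w \<subseteq> A}"

text \<open>The full shift A^N with the product of discrete topologies.
  Positions are indexed by nat starting at 0 (the paper uses 1,2,3,...).\<close>
definition full_shift :: "'a set \<Rightarrow> (nat \<Rightarrow> 'a) topology" where
  "full_shift A = product_topology (\<lambda>_. discrete_topology A) UNIV"

definition sliding_block_code :: "nat \<Rightarrow> ('a list \<Rightarrow> 'a) \<Rightarrow> (nat \<Rightarrow> 'a) \<Rightarrow> (nat \<Rightarrow> 'a)" where
  "sliding_block_code n d x = (\<lambda>i. d (map x [i..<i+n]))"

definition p_map :: "nat \<Rightarrow> ('a list \<Rightarrow> 'a) \<Rightarrow> nat \<Rightarrow> 'a list \<Rightarrow> 'a list \<Rightarrow> 'a list" where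
  "p_map n d m w \<beta> = map (\<lambda>j. d (take n (drop j (w @ \<beta>)))) [0..<m]"

definition weakly_progressive_order :: "'a set \<Rightarrow> nat \<Rightarrow> ('a list \<Rightarrow> 'a) \<Rightarrow> nat \<Rightarrow> bool" where
  "weakly_progressive_order A n d m \<longleftrightarrow>
     (\<forall>\<mu>\<in>words A n. \<forall>\<nu>\<in>words A m. d \<mu> = hd \<nu> \<longrightarrow>
        (\<exists>!a. a \<in> A \<and> (\<exists>\<alpha>\<in>words A (m - 1). p_map n d m (take (n - 1) \<mu>) (a # \<alpha>) = \<nu>)))"

definition weakly_progressive :: "'a set \<Rightarrow> nat \<Rightarrow> ('a list \<Rightarrow> 'a) \<Rightarrow> bool" where
  "weakly_progressive A n d \<longleftrightarrow> (\<exists>m\<ge>1. weakly_progressive_order A n d m)"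

definition local_homeomorphism_map :: "'a topology \<Rightarrow> 'b topology \<Rightarrow> ('a \<Rightarrow> 'b) \<Rightarrow> bool" where
  "local_homeomorphism_map X Y f \<longleftrightarrow> continuous_map X Y f \<and>
     (\<forall>x\<in>topspace X. \<exists>U. openin X U \<and> x \<in> U \<and> openin Y (f ` U) \<and>
        homeomorphic_map (subtopology X U) (subtopology Y (f ` U)) f)"

end

theory Submission
  imports Defs
begin

(* Around a point x, restrict to the clopen cylinder U of sequences sharing the first n - 1
   letters w of x. On U the code is injective: by weak progressivity, the letters
   z(k), ..., z(k+n-2) together with the image determine z(k+n-1). Its image is the open set of
   all y whose first letter lies in d(w A): a preimage is built letter by letter, keeping the
   invariant that the current window v admits a letter b with d(v b) equal to the next image
   letter. Since the full shift is compact Hausdorff, the continuous bijection from U onto its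
   image is a homeomorphism. *)

lemma local_homeomorphism_map_compact_Hausdorff:
  assumes "compact_space X" and "Hausdorff_space Y" and f: "continuous_map X Y f"
    and nbhd: "\<And>x. x \<in> topspace X \<Longrightarrow>
      \<exists>U. openin X U \<and> closedin X U \<and> x \<in> U \<and> openin Y (f ` U) \<and> inj_on f U"
  shows "local_homeomorphism_map X Y f"
  unfolding local_homeomorphism_map_def
proof (intro conjI f ballI)
  fix x assume "x \<in> topspace X"
  then obtain U where U: "openin X U" "closedin X U" "x \<in> U" "openin Y (f ` U)" "inj_on f U"
    using nbhd by blast
  have top: "topspace (subtopology X U) = U"
    by (rule topspace_subtopology_subset[OF openin_subset[OF U(1)]])
  have "embedding_map (subtopology X U) Y f"
  proof (rule continuous_imp_embedding_map)
    show "continuous_map (subtopology X U) Y f"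
      by (rule continuous_map_from_subtopology[OF f])
    show "compact_space (subtopology X U)"
      by (rule compact_space_subtopology[OF closedin_compact_space[OF assms(1) U(2)]])
  qed (use assms(2) U(5) top in auto)
  then have "homeomorphic_map (subtopology X U) (subtopology Y (f ` U)) f"
    by (simp only: embedding_map_def top)
  then show "\<exists>U. openin X U \<and> x \<in> U \<and> openin Y (f ` U) \<and>
      homeomorphic_map (subtopology X U) (subtopology Y (f ` U)) f"
    using U by blast
qed

lemma topspace_full_shift: "topspace (full_shift A) = {z. \<forall>i. z i \<in> A}"
  by (auto simp: full_shift_def PiE_def extensional_def)

definition cylinder :: "'a set \<Rightarrow> nat set \<Rightarrow> (nat \<Rightarrow> 'a) \<Rightarrow> (nat \<Rightarrow> 'a) set" where
  "cylinder A I x = {z. (\<forall>i. z i \<in> A) \<and> (\<forall>i\<in>I. z i = x i)}"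

lemma cylinder_eq_PiE: "cylinder A I x = (\<Pi>\<^sub>E i\<in>UNIV. if i \<in> I then {x i} \<inter> A else A)"
proof -
  have "z i \<in> (if i \<in> I then {x i} \<inter> A else A) \<longleftrightarrow> z i \<in> A \<and> (i \<in> I \<longrightarrow> z i = x i)" for z i
    by auto
  then show ?thesis
    unfolding cylinder_def PiE_iff by blast
qed

lemma openin_cylinder:
  assumes "finite I"
  shows "openin (full_shift A) (cylinder A I x)"
  unfolding cylinder_eq_PiE full_shift_def
proof (rule product_topology_basis)
  show "finite {i. (if i \<in> I then {x i} \<inter> A else A) \<noteq> topspace (discrete_topology A)}"
    by (rule rev_finite_subset[OF assms]) auto
qed simp

lemma closedin_cylinder: "closedin (full_shift A) (cylinder A I x)"
  unfolding cylinder_eq_PiE full_shift_def closedin_product_topology by simp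

lemma compact_space_full_shift: "finite A \<Longrightarrow> compact_space (full_shift A)"
  unfolding full_shift_def compact_space_product_topology
  by (simp add: compact_space_discrete_topology)

lemma Hausdorff_space_full_shift: "Hausdorff_space (full_shift A)"
  unfolding full_shift_def Hausdorff_space_product_topology by simp

lemma openin_full_shift_coordinate:
  "openin (full_shift A) {y \<in> topspace (full_shift A). y i \<in> S}"
proof -
  have "{y \<in> topspace (full_shift A). y i \<in> S} = {y \<in> topspace (full_shift A). y i \<in> S \<inter> A}"
    by (auto simp: topspace_full_shift)
  also have "openin (full_shift A) \<dots>"
    unfolding full_shift_def
    by (rule openin_continuous_map_preimage[OF continuous_map_product_projection]) auto
  finally show ?thesis .
qed

lemma continuous_map_full_shift_to_discrete:
  assumes "finite I" and "g \<in> topspace (full_shift A) \<rightarrow> B"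
    and "\<And>z z'. z \<in> topspace (full_shift A) \<Longrightarrow> z' \<in> topspace (full_shift A) \<Longrightarrow>
           (\<forall>i\<in>I. z i = z' i) \<Longrightarrow> g z = g z'"
  shows "continuous_map (full_shift A) (discrete_topology B) g"
  unfolding continuous_map_def
proof (intro conjI allI impI)
  show "g \<in> topspace (full_shift A) \<rightarrow> topspace (discrete_topology B)"
    using assms(2) by simp
  fix S
  let ?P = "{z \<in> topspace (full_shift A). g z \<in> S}"
  have "\<exists>T. openin (full_shift A) T \<and> z \<in> T \<and> T \<subseteq> ?P" if z: "z \<in> ?P" for z
  proof (intro exI conjI)
    show "openin (full_shift A) (cylinder A I z)"
      by (rule openin_cylinder[OF assms(1)])
    show "z \<in> cylinder A I z"
      using z by (simp add: cylinder_def topspace_full_shift)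
    show "cylinder A I z \<subseteq> ?P"
    proof
      fix z' assume z': "z' \<in> cylinder A I z"
      have "z' \<in> topspace (full_shift A)"
        using z' by (simp add: cylinder_def topspace_full_shift)
      moreover have "g z' = g z"
        using z' z by (rule_tac assms(3)) (auto simp: cylinder_def topspace_full_shift)
      ultimately show "z' \<in> ?P"
        using z by simp
    qed
  qed
  then show "openin (full_shift A) ?P"
    by (subst openin_subopen) blast
qed

lemma map_upt_in_words: "(\<forall>i. z i \<in> A) \<Longrightarrow> map z [k..<k+n] \<in> words A n"
  by (auto simp: words_def)

lemma sliding_block_code_in_topspace:
  assumes "\<forall>w\<in>words A n. d w \<in> A" and "z \<in> topspace (full_shift A)"
  shows "sliding_block_code n d z \<in> topspace (full_shift A)"
proof -
  have z: "\<forall>i. z i \<in> A"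
    using assms(2) by (simp add: topspace_full_shift)
  show ?thesis
    using assms(1) map_upt_in_words[OF z] by (auto simp: topspace_full_shift sliding_block_code_def)
qed

lemma sliding_block_code_snoc:
  "n \<ge> 1 \<Longrightarrow> sliding_block_code n d z k = d (map z [k..<k+(n-1)] @ [z (k+(n-1))])"
  by (cases n) (auto simp: sliding_block_code_def)

lemma continuous_map_sliding_block_code:
  assumes dA: "\<forall>w\<in>words A n. d w \<in> A"
  shows "continuous_map (full_shift A) (full_shift A) (sliding_block_code n d)"
proof -
  have "continuous_map (full_shift A) (discrete_topology A) (\<lambda>z. sliding_block_code n d z k)" for k
  proof (rule continuous_map_full_shift_to_discrete[of "{k..<k+n}"])
    show "(\<lambda>z. sliding_block_code n d z k) \<in> topspace (full_shift A) \<rightarrow> A"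
      using sliding_block_code_in_topspace[OF dA] by (auto simp: topspace_full_shift)
    show "sliding_block_code n d z k = sliding_block_code n d z' k"
      if "\<forall>i\<in>{k..<k+n}. z i = z' i" for z z'
      using that unfolding sliding_block_code_def by (auto intro!: arg_cong[where f = d])
  qed simp
  then have "continuous_map (full_shift A) (product_topology (\<lambda>_. discrete_topology A) UNIV)
      (sliding_block_code n d)"
    by (simp add: continuous_map_componentwise_UNIV)
  then show ?thesis
    by (simp add: full_shift_def[symmetric])
qed

lemma nth_p_map: "j < m \<Longrightarrow> p_map n d m v \<beta> ! j = d (take n (drop j (v @ \<beta>)))"
  by (simp add: p_map_def)

lemma hd_p_map:
  assumes "length v = n - 1" and "n \<ge> 1" and "m \<ge> 1"
  shows "hd (p_map n d m v (a # \<beta>)) = d (v @ [a])"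
  using assms by (simp add: p_map_def hd_map hd_upt)

lemma p_map_in_words:
  assumes dA: "\<forall>w\<in>words A n. d w \<in> A" and "v \<in> words A (n-1)" and "\<beta> \<in> words A m"
    and "n \<ge> 1"
  shows "p_map n d m v \<beta> \<in> words A m"
proof -
  have "take n (drop j (v @ \<beta>)) \<in> words A n" if "j < m" for j
    using assms that by (auto simp: words_def dest!: in_set_takeD in_set_dropD)
  then show ?thesis
    using dA by (auto simp: p_map_def words_def)
qed

lemma p_map_sliding_block_code:
  assumes "n \<ge> 1"
  shows "p_map n d m (map z [k..<k+(n-1)]) (map z [k+(n-1)..<k+(n-1)+m])
       = map (sliding_block_code n d z) [k..<k+m]" (is "?lhs = ?rhs")
proof (rule nth_equalityI)
  show "length ?lhs = length ?rhs"
    by (simp add: p_map_def)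
next
  fix j assume "j < length ?lhs"
  then have j: "j < m"
    by (simp add: p_map_def)
  have app: "map z [k..<k+(n-1)] @ map z [k+(n-1)..<k+(n-1)+m] = map z [k..<k+(n-1)+m]"
    by (metis le_add1 map_append upt_add_eq_append)
  have window: "take n (drop j [k..<k+(n-1)+m]) = [k+j..<k+j+n]"
    using j assms by (simp add: take_upt)
  have "?lhs ! j = d (take n (drop j (map z [k..<k+(n-1)+m])))"
    by (simp only: nth_p_map[OF j] app)
  also have "\<dots> = d (map z [k+j..<k+j+n])"
    by (simp only: drop_map take_map window)
  also have "\<dots> = ?rhs ! j"
    using j by (simp add: sliding_block_code_def)
  finally show "?lhs ! j = ?rhs ! j" .
qed

lemma weakly_progressive_orderD:
  assumes "weakly_progressive_order A n d m" and "n \<ge> 1" and "v \<in> words A (n-1)" and "b \<in> A"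
    and "\<nu> \<in> words A m" and "d (v @ [b]) = hd \<nu>"
  shows "\<exists>!a. a \<in> A \<and> (\<exists>\<alpha>\<in>words A (m-1). p_map n d m v (a # \<alpha>) = \<nu>)"
proof -
  have "v @ [b] \<in> words A n" and tk: "take (n-1) (v @ [b]) = v"
    using assms(2-4) by (auto simp: words_def)
  then have "\<exists>!a. a \<in> A \<and> (\<exists>\<alpha>\<in>words A (m-1). p_map n d m (take (n-1) (v @ [b])) (a # \<alpha>) = \<nu>)"
    using assms(1,5,6) unfolding weakly_progressive_order_def by blast
  then show ?thesis
    unfolding tk .
qed

lemma weakly_progressive_order_unique:
  assumes wp: "weakly_progressive_order A n d m" and "m \<ge> 1" and "n \<ge> 1"
    and dA: "\<forall>w\<in>words A n. d w \<in> A" and v: "v \<in> words A (n-1)"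
    and "a \<in> A" and "a' \<in> A" and "\<alpha> \<in> words A (m-1)" and "\<alpha>' \<in> words A (m-1)"
    and eq: "p_map n d m v (a # \<alpha>) = p_map n d m v (a' # \<alpha>')"
  shows "a = a'"
proof -
  let ?\<nu> = "p_map n d m v (a # \<alpha>)"
  have "a # \<alpha> \<in> words A m"
    using assms(2,6,8) by (auto simp: words_def)
  then have "?\<nu> \<in> words A m"
    using p_map_in_words[OF dA v] \<open>n \<ge> 1\<close> by blast
  moreover have "d (v @ [a]) = hd ?\<nu>"
    using v assms(2,3) by (simp add: hd_p_map words_def)
  ultimately have "\<exists>!b. b \<in> A \<and> (\<exists>\<beta>\<in>words A (m-1). p_map n d m v (b # \<beta>) = ?\<nu>)"
    by (rule weakly_progressive_orderD[OF wp \<open>n \<ge> 1\<close> v \<open>a \<in> A\<close>])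
  moreover have "a \<in> A \<and> (\<exists>\<beta>\<in>words A (m-1). p_map n d m v (a # \<beta>) = ?\<nu>)"
    using assms(6,8) by blast
  moreover have "a' \<in> A \<and> (\<exists>\<beta>\<in>words A (m-1). p_map n d m v (a' # \<beta>) = ?\<nu>)"
    using assms(7,9) eq[symmetric] by blast
  ultimately show "a = a'"
    by blast
qed

(* For m = 1, weak progressivity says that each b \<mapsto> d(v b) is injective; finiteness of A
   makes it a bijection. *)
lemma weakly_progressive_order_1_image:
  assumes wp: "weakly_progressive_order A n d 1" and "finite A" and n: "n \<ge> 1"
    and dA: "\<forall>w\<in>words A n. d w \<in> A" and v: "v \<in> words A (n-1)"
  shows "(\<lambda>b. d (v @ [b])) ` A = A"
proof (rule endo_inj_surj[OF \<open>finite A\<close>])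
  have vb: "v @ [b] \<in> words A n" if "b \<in> A" for b
    using v n that by (auto simp: words_def)
  then show "(\<lambda>b. d (v @ [b])) ` A \<subseteq> A"
    using dA by blast
  have nil: "[] \<in> words A (1-1)"
    by (simp add: words_def)
  show "inj_on (\<lambda>b. d (v @ [b])) A"
    by (rule inj_onI, rule weakly_progressive_order_unique[OF wp _ n dA v _ _ nil nil])
      (use v n in \<open>simp_all add: p_map_def words_def\<close>)
qed

(* The chosen letter a keeps the next window extendable: for m \<ge> 2 the extension is the second
   letter of a solution of the progressivity equation, for m = 1 it exists by bijectivity. *)
lemma weakly_progressive_order_extend:
  assumes wp: "weakly_progressive_order A n d m" and m: "m \<ge> 1" and n: "n \<ge> 1"
    and "finite A" and dA: "\<forall>w\<in>words A n. d w \<in> A"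
    and v: "v \<in> words A (n-1)" and b: "b \<in> A" and c: "c \<in> A"
  shows "\<exists>a\<in>A. d (v @ [a]) = d (v @ [b]) \<and> (\<exists>b'\<in>A. d (tl (v @ [a]) @ [b']) = c)"
proof (cases "m = 1")
  case True
  have "tl (v @ [b]) \<in> words A (n-1)"
    using v b by (cases v) (auto simp: words_def)
  then have "c \<in> (\<lambda>b'. d (tl (v @ [b]) @ [b'])) ` A"
    using weakly_progressive_order_1_image[OF _ \<open>finite A\<close> n dA] wp c True by blast
  then show ?thesis
    using b by blast
next
  case False
  have lv: "length v = n - 1"
    using v by (simp add: words_def)
  define \<nu> where "\<nu> = d (v @ [b]) # replicate (m-1) c"
  have "v @ [b] \<in> words A n"
    using v b n by (auto simp: words_def)
  then have "\<nu> \<in> words A m"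
    using dA c m by (auto simp: \<nu>_def words_def)
  then obtain a \<alpha> where a: "a \<in> A" and \<alpha>: "\<alpha> \<in> words A (m-1)"
    and p: "p_map n d m v (a # \<alpha>) = \<nu>"
    using weakly_progressive_orderD[OF wp n v b] by (force simp: \<nu>_def)
  obtain c' \<alpha>' where \<alpha>_eq: "\<alpha> = c' # \<alpha>'" and c': "c' \<in> A"
    using \<alpha> False m by (cases \<alpha>) (auto simp: words_def)
  have window: "take n (drop 1 (v @ a # \<alpha>)) = tl (v @ [a]) @ [c']"
  proof -
    have "drop 1 (v @ a # c' # \<alpha>') = tl (v @ [a]) @ c' # \<alpha>'"
      by (cases v) auto
    then show ?thesis
      using lv n \<alpha>_eq by simp
  qed
  have "d (v @ [a]) = d (v @ [b])"
    using hd_p_map[OF lv n m, of d a \<alpha>] p by (simp add: \<nu>_def)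
  moreover have "d (tl (v @ [a]) @ [c']) = c"
    using nth_p_map[of 1 m n d v "a # \<alpha>"] p False m window by (simp add: \<nu>_def)
  ultimately show ?thesis
    using a c' by blast
qed

(* Dependent choice along a sliding window: P is an invariant of the current window, R the
   constraint on the letter appended to it. *)
lemma sliding_window_choice:
  fixes w :: "'a list"
  assumes "P 0 w"
    and step: "\<And>k v. P k v \<Longrightarrow> \<exists>a. R k v a \<and> P (Suc k) (tl (v @ [a]))"
  shows "\<exists>z. (\<forall>i<length w. z i = w ! i) \<and> (\<forall>k. R k (map z [k..<k + length w]) (z (k + length w)))"
proof -
  define pick where "pick k v = (SOME a. R k v a \<and> P (Suc k) (tl (v @ [a])))" for k v
  have pick: "R k v (pick k v) \<and> P (Suc k) (tl (v @ [pick k v]))" if "P k v" for k v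
    unfolding pick_def by (rule someI_ex[OF step[OF that]])
  define win where "win = rec_nat w (\<lambda>k v. tl (v @ [pick k v]))"
  have win_0: "win 0 = w" and win_Suc: "win (Suc k) = tl (win k @ [pick k (win k)])" for k
    by (simp_all add: win_def)
  have P_win: "P k (win k)" for k
    by (induction k) (use assms(1) pick in \<open>simp_all add: win_0 win_Suc\<close>)
  let ?l = "length w"
  define z where "z i = (if i < ?l then w ! i else pick (i - ?l) (win (i - ?l)))" for i
  have win_eq: "win k = map z [k..<k + ?l]" for k
  proof (induction k)
    case 0
    show ?case
      by (rule nth_equalityI) (simp_all add: win_0 z_def)
  next
    case (Suc k)
    have "z (k + ?l) = pick k (win k)"
      by (simp add: z_def)
    then have "win (Suc k) = tl (map z [k..<Suc k + ?l])"
      using Suc by (simp add: win_Suc)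
    then show ?case
      by (simp del: upt_Suc add: map_tl[symmetric] tl_upt)
  qed
  show ?thesis
  proof (intro exI conjI allI impI)
    show "z i = w ! i" if "i < ?l" for i
      using that by (simp add: z_def)
    show "R k (map z [k..<k + ?l]) (z (k + ?l))" for k
      using pick[OF P_win[of k]] win_eq[of k] by (simp add: z_def)
  qed
qed

lemma ex_sliding_block_code_preimage:
  assumes wp: "weakly_progressive_order A n d m" and m: "m \<ge> 1" and n: "n \<ge> 1"
    and fin: "finite A" and dA: "\<forall>w\<in>words A n. d w \<in> A" and y: "\<forall>i. y i \<in> A"
    and w: "w \<in> words A (n-1)" and b: "b \<in> A" and y0: "d (w @ [b]) = y 0"
  shows "\<exists>z. (\<forall>i. z i \<in> A) \<and> (\<forall>i<n-1. z i = w ! i) \<and> sliding_block_code n d z = y"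
proof -
  let ?P = "\<lambda>k v. v \<in> words A (n-1) \<and> (\<exists>b\<in>A. d (v @ [b]) = y k)"
  let ?R = "\<lambda>k v a. a \<in> A \<and> d (v @ [a]) = y k"
  have lw: "length w = n - 1" and sw: "set w \<subseteq> A"
    using w by (auto simp: words_def)
  have "\<exists>z. (\<forall>i<length w. z i = w ! i) \<and> (\<forall>k. ?R k (map z [k..<k + length w]) (z (k + length w)))"
  proof (rule sliding_window_choice[where P = ?P])
    show "?P 0 w"
      using w b y0 by blast
    show "\<exists>a. ?R k v a \<and> ?P (Suc k) (tl (v @ [a]))" if Pv: "?P k v" for k v
    proof -
      obtain b where v: "v \<in> words A (n-1)" and "b \<in> A" and "d (v @ [b]) = y k"
        using Pv by blast
      then obtain a b' where "a \<in> A" "d (v @ [a]) = y k" "b' \<in> A" "d (tl (v @ [a]) @ [b']) = y (Suc k)"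
        using weakly_progressive_order_extend[OF wp m n fin dA v _ y[rule_format, of "Suc k"]] by metis
      moreover have "tl (v @ [a]) \<in> words A (n-1)"
        using v \<open>a \<in> A\<close> by (cases v) (auto simp: words_def)
      ultimately show ?thesis
        by blast
    qed
  qed
  then obtain z where zw: "\<forall>i<n-1. z i = w ! i"
    and zR: "\<And>k. z (k + (n-1)) \<in> A \<and> d (map z [k..<k + (n-1)] @ [z (k + (n-1))]) = y k"
    unfolding lw by blast
  have "z i \<in> A" for i
  proof (cases "i < n - 1")
    case True
    then show ?thesis
      using zw sw lw by (auto dest: nth_mem)
  next
    case False
    then show ?thesis
      using zR[of "i - (n-1)"] by simp
  qed
  moreover have "sliding_block_code n d z = y"
    using zR by (simp add: fun_eq_iff sliding_block_code_snoc[OF n])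
  ultimately show ?thesis
    using zw by blast
qed

lemma image_sliding_block_code_cylinder:
  assumes wp: "weakly_progressive_order A n d m" and m: "m \<ge> 1" and n: "n \<ge> 1"
    and fin: "finite A" and dA: "\<forall>w\<in>words A n. d w \<in> A" and x: "x \<in> topspace (full_shift A)"
  shows "sliding_block_code n d ` cylinder A {..<n-1} x =
    {y \<in> topspace (full_shift A). y 0 \<in> (\<lambda>b. d (map x [0..<n-1] @ [b])) ` A}"
    (is "?f ` ?U = ?V")
proof
  let ?w = "map x [0..<n-1]"
  show "?f ` ?U \<subseteq> ?V"
  proof
    fix y assume "y \<in> ?f ` ?U"
    then obtain z where z: "z \<in> ?U" and y: "y = ?f z"
      by blast
    have zt: "z \<in> topspace (full_shift A)"
      using z by (simp add: cylinder_def topspace_full_shift)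
    have "map z [0..<n-1] = ?w"
      using z by (simp add: cylinder_def)
    then have "y 0 = d (?w @ [z (n-1)])"
      using sliding_block_code_snoc[OF n, of d z 0] y by (metis add_0)
    then show "y \<in> ?V"
      using y sliding_block_code_in_topspace[OF dA zt] zt by (auto simp: topspace_full_shift)
  qed
  show "?V \<subseteq> ?f ` ?U"
  proof
    fix y assume "y \<in> ?V"
    then obtain b where y: "\<forall>i. y i \<in> A" and b: "b \<in> A" and y0: "d (?w @ [b]) = y 0"
      by (auto simp: topspace_full_shift)
    have "?w \<in> words A (n-1)"
      using x map_upt_in_words[of x A 0 "n-1"] by (simp add: topspace_full_shift)
    then obtain z where "\<forall>i. z i \<in> A" and "\<forall>i<n-1. z i = ?w ! i" and "?f z = y"
      using ex_sliding_block_code_preimage[OF wp m n fin dA y _ b y0] by blast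
    then show "y \<in> ?f ` ?U"
      by (auto simp: cylinder_def)
  qed
qed

lemma inj_on_sliding_block_code_cylinder:
  assumes wp: "weakly_progressive_order A n d m" and m: "m \<ge> 1" and n: "n \<ge> 1"
    and dA: "\<forall>w\<in>words A n. d w \<in> A"
  shows "inj_on (sliding_block_code n d) (cylinder A {..<n-1} x)"
proof (rule inj_onI)
  fix z z' assume z: "z \<in> cylinder A {..<n-1} x" and z': "z' \<in> cylinder A {..<n-1} x"
    and eq: "sliding_block_code n d z = sliding_block_code n d z'"
  have zA: "\<forall>i. z i \<in> A" and z'A: "\<forall>i. z' i \<in> A"
    using z z' by (simp_all add: cylinder_def)
  have "z i = z' i" for i
  proof (induction i rule: less_induct)
    case (less i)
    show ?case
    proof (cases "i < n - 1")
      case True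
      then show ?thesis
        using z z' by (simp add: cylinder_def)
    next
      case False
      then obtain k where i: "i = k + (n-1)"
        by (metis add.commute le_add_diff_inverse not_less)
      let ?v = "map z [k..<k+(n-1)]"
      have win: "map z' [k..<k+(n-1)] = ?v"
        using less i by simp
      have cons: "map g [k+(n-1)..<k+(n-1)+m] = g i # map g [k+n..<k+(n-1)+m]" for g :: "nat \<Rightarrow> 'a"
        using m n i by (simp add: upt_conv_Cons)
      have "p_map n d m ?v (z i # map z [k+n..<k+(n-1)+m]) = p_map n d m ?v (z' i # map z' [k+n..<k+(n-1)+m])"
        using p_map_sliding_block_code[OF n, of d m z k] p_map_sliding_block_code[OF n, of d m z' k]
        by (simp only: cons win eq)
      moreover have "map g [k+n..<k+(n-1)+m] \<in> words A (m-1)" if "\<forall>i. g i \<in> A" for g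
        using that n by (auto simp: words_def)
      ultimately show ?thesis
        using weakly_progressive_order_unique[OF wp m n dA map_upt_in_words[OF zA]] zA z'A by blast
    qed
  qed
  then show "z = z'"
    by blast
qed

theorem theorem3p11:
  fixes A :: "'a set" and n :: nat and d :: "'a list \<Rightarrow> 'a"
  assumes "finite A"
    and "n \<ge> 1"
    and "\<forall>w\<in>words A n. d w \<in> A"
    and "weakly_progressive A n d"
  shows "local_homeomorphism_map (full_shift A) (full_shift A) (sliding_block_code n d)"
proof -
  obtain m where m: "m \<ge> 1" and wp: "weakly_progressive_order A n d m"
    using assms(4) unfolding weakly_progressive_def by blast
  show ?thesis
  proof (rule local_homeomorphism_map_compact_Hausdorff[OF compact_space_full_shift[OF assms(1)]
        Hausdorff_space_full_shift continuous_map_sliding_block_code[OF assms(3)]])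
    fix x assume x: "x \<in> topspace (full_shift A)"
    let ?U = "cylinder A {..<n-1} x"
    show "\<exists>U. openin (full_shift A) U \<and> closedin (full_shift A) U \<and> x \<in> U \<and>
        openin (full_shift A) (sliding_block_code n d ` U) \<and> inj_on (sliding_block_code n d) U"
    proof (intro exI[of _ ?U] conjI)
      show "openin (full_shift A) ?U"
        by (rule openin_cylinder) simp
      show "closedin (full_shift A) ?U"
        by (rule closedin_cylinder)
      show "x \<in> ?U"
        using x by (simp add: cylinder_def topspace_full_shift)
      show "openin (full_shift A) (sliding_block_code n d ` ?U)"
        unfolding image_sliding_block_code_cylinder[OF wp m assms(2,1,3) x]
        by (rule openin_full_shift_coordinate)
      show "inj_on (sliding_block_code n d) ?U"
        by (rule inj_on_sliding_block_code_cylinder[OF wp m assms(2,3)])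
    qed
  qed
qed

end
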